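(* Let $(M,\le,\circ,e,\rightharpoonup,\leftharpoonup)$ be a biclosed poset. Then: (1) $\mathsf{Dial}_M(\mathsf{Set})$ is a category. (2) The tensor product $\otimes$ is a bifunctor on it, and together with the unit $I=(\mathbb{1},\mathbb{1},e)$ (where $\mathbb{1}$ is a one-element set) and suitable associator and left/right unitor isomorphisms it makes $\mathsf{Dial}_M(\mathsf{Set})$ a (generally non-symmetric) monoidal category. (3) For all objects $A,B,C$ there are bijections, natural in $A,B,C$, $$\mathrm{Hom}(A\otimes B,C)\cong \mathrm{Hom}(B,A\rightharpoonup C),\qquad \mathrm{Hom}(A\otimes B,C)\cong \mathrm{Hom}(A,C\leftharpoonup B).$$ That is, $\mathsf{Dial}_M(\mathsf{Set})$ is monoidal biclosed.
   Context: A biclosed poset $(M,\le,\circ,e,\rightharpoonup,\leftharpoonup)$ is a partially ordered monoid $(M,\le,\circ,e)$, not necessarily commutative, with $\circ$ monotone in each argument, such that for all $a,b\in M$ the following exist: - $a\rightharpoonup b$, the largest $x\in M$ with $a\circ x\le b$; - $b\leftharpoonup a$, the largest $x\in M$ with $x\circ a\le b$. The category $\mathsf{Dial}_M(\mathsf{Set})$ of dialectica Lambek spaces is defined as follows. - Objects are triples $(U,X,\alpha)$ with $U,X$ sets and $\alpha:U\times X\to M$ a function. - A morphism $(f,F):(U,X,\alpha)\to(V,Y,\beta)$ is a pair of functions $f:U\to V$ and $F:Y\to X$ such that $\alpha(u,F(y))\le\beta(f(u),y)$ for all $u\in U$ and $y\in Y$. - Composition is $(g,G)\circ(f,F)=(g\circ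 f,\;F\circ G)$, and identities are $(\mathrm{id},\mathrm{id})$. Tensor product: $(U,X,\alpha)\otimes(V,Y,\beta)=(U\times V,\;(V\to X)\times(U\to Y),\;\alpha\otimes\beta)$, where $$(\alpha\otimes\beta)((u,v),(h,k))=\alpha(u,h(v))\circ\beta(k(u),v).$$ Here $S\to T$ denotes the set of all functions from $S$ to $T$. On morphisms $(f,F):(U,X,\alpha)\to(U',X',\alpha')$ and $(g,G):(V,Y,\beta)\to(V',Y',\beta')$, the tensor is $$(f,F)\otimes(g,G)=\big(f\times g,\;(h,k)\mapsto(F\circ h\circ g,\;G\circ k\circ f)\big).$$ Internal homs: for $A=(U,X,\alpha)$ and $C=(V,Y,\beta)$, $$A\rightharpoonup C=\big((U\to V)\times(Y\to X),\;U\times Y,\;\alpha\rightharpoonup\beta\big),\qquad (\alpha\rightharpoonup\beta)((h,H),(u,y))=\alpha(u,H(y))\rightharpoonup\beta(h(u),y),$$ $$C\leftharpoonup A=\big((U\to V)\times(Y\to X),\;U\times Y,\;\beta\leftharpoonup\alpha\big),\qquad (\beta\leftharpoonup\alpha)((h,H),(u,y))=\beta(h(u),y)\leftharpoonup\alpha(u,H(y)).$$ *)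

theory Defs
  imports "HOL-Library.FuncSet"
begin

text \<open>The poset structure of M is the type-class order on the type 'm.
  The monoid operation, unit and the two residuals are explicit parameters.
  'li a b' is the residual a \<rightharpoonup> b (largest x with a o x \<le> b);
  'ri b a' is the residual b \<leftharpoonup> a (largest x with x o a \<le> b).\<close>

definition biclosed_poset ::
  "('m::order \<Rightarrow> 'm \<Rightarrow> 'm) \<Rightarrow> 'm \<Rightarrow> ('m \<Rightarrow> 'm \<Rightarrow> 'm) \<Rightarrow> ('m \<Rightarrow> 'm \<Rightarrow> 'm) \<Rightarrow> bool" where
  "biclosed_poset mult e li ri \<longleftrightarrow>
     (\<forall>a b c. mult (mult a b) c = mult a (mult b c)) \<and>
     (\<forall>a. mult e a = a \<and> mult a e = a) \<and>
     (\<forall>a a' b. a \<le> a' \<longrightarrow> mult a b \<le> mult a' b) \<and>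
     (\<forall>a b b'. b \<le> b' \<longrightarrow> mult a b \<le> mult a b') \<and>
     (\<forall>a b. mult a (li a b) \<le> b \<and> (\<forall>x. mult a x \<le> b \<longrightarrow> x \<le> li a b)) \<and>
     (\<forall>a b. mult (ri b a) a \<le> b \<and> (\<forall>x. mult x a \<le> b \<longrightarrow> x \<le> ri b a))"

text \<open>Functions between sets are represented as
  extensional HOL functions (FuncSet's \<open>\<rightarrow>\<^sub>E\<close>), so that equality of morphisms
  is equality of set-theoretic functions.\<close>

record ('u, 'x, 'm) dobj =
  pos :: "'u set"
  neg :: "'x set"
  rel :: "'u \<Rightarrow> 'x \<Rightarrow> 'm"

definition dhom :: "('u, 'x, 'm::order) dobj \<Rightarrow> ('v, 'y, 'm) dobj \<Rightarrow> (('u \<Rightarrow> 'v) \<times> ('y \<Rightarrow> 'x)) set" where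
  "dhom A B = {(f, F). f \<in> pos A \<rightarrow>\<^sub>E pos B \<and> F \<in> neg B \<rightarrow>\<^sub>E neg A \<and>
      (\<forall>u\<in>pos A. \<forall>y\<in>neg B. rel A u (F y) \<le> rel B (f u) y)}"

definition did :: "('u, 'x, 'm) dobj \<Rightarrow> ('u \<Rightarrow> 'u) \<times> ('x \<Rightarrow> 'x)" where
  "did A = ((\<lambda>u\<in>pos A. u), (\<lambda>x\<in>neg A. x))"

text \<open>\<open>dcomp A C g f\<close> is the composite g o f of f : A \<rightarrow> B and g : B \<rightarrow> C,
  i.e. (g o f, F o G).\<close>
definition dcomp :: "('u, 'x, 'm) dobj \<Rightarrow> ('w, 'z, 'm) dobj \<Rightarrow>
    ('v \<Rightarrow> 'w) \<times> ('z \<Rightarrow> 'y) \<Rightarrow> ('u \<Rightarrow> 'v) \<times> ('y \<Rightarrow> 'x) \<Rightarrow> ('u \<Rightarrow> 'w) \<times> ('z \<Rightarrow> 'x)" where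
  "dcomp A C g f = (compose (pos A) (fst g) (fst f), compose (neg C) (snd f) (snd g))"

definition diso :: "('u, 'x, 'm::order) dobj \<Rightarrow> ('v, 'y, 'm) dobj \<Rightarrow> ('u \<Rightarrow> 'v) \<times> ('y \<Rightarrow> 'x) \<Rightarrow> bool" where
  "diso A B f \<longleftrightarrow> f \<in> dhom A B \<and>
     (\<exists>g\<in>dhom B A. dcomp A A g f = did A \<and> dcomp B B f g = did B)"

definition dtensor :: "('m \<Rightarrow> 'm \<Rightarrow> 'm) \<Rightarrow> ('u, 'x, 'm) dobj \<Rightarrow> ('v, 'y, 'm) dobj \<Rightarrow>
    ('u \<times> 'v, ('v \<Rightarrow> 'x) \<times> ('u \<Rightarrow> 'y), 'm) dobj" where
  "dtensor mult A B =
     \<lparr>pos = pos A \<times> pos B,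
      neg = (pos B \<rightarrow>\<^sub>E neg A) \<times> (pos A \<rightarrow>\<^sub>E neg B),
      rel = (\<lambda>(u, v) (h, k). mult (rel A u (h v)) (rel B v (k u)))\<rparr>"

definition dtensor_mor :: "('u, 'x, 'm) dobj \<Rightarrow> ('v, 'y, 'm) dobj \<Rightarrow>
    ('u2, 'x2, 'm) dobj \<Rightarrow> ('v2, 'y2, 'm) dobj \<Rightarrow>
    ('u \<Rightarrow> 'u2) \<times> ('x2 \<Rightarrow> 'x) \<Rightarrow> ('v \<Rightarrow> 'v2) \<times> ('y2 \<Rightarrow> 'y) \<Rightarrow>
    ('u \<times> 'v \<Rightarrow> 'u2 \<times> 'v2) \<times> (('v2 \<Rightarrow> 'x2) \<times> ('u2 \<Rightarrow> 'y2) \<Rightarrow> ('v \<Rightarrow> 'x) \<times> ('u \<Rightarrow> 'y))" where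
  "dtensor_mor A B A' B' f g =
     ((\<lambda>(u, v)\<in>pos A \<times> pos B. (fst f u, fst g v)),
      (\<lambda>(h, k)\<in>(pos B' \<rightarrow>\<^sub>E neg A') \<times> (pos A' \<rightarrow>\<^sub>E neg B').
          ((\<lambda>v\<in>pos B. snd f (h (fst g v))), (\<lambda>u\<in>pos A. snd g (k (fst f u))))))"

definition dunit :: "'m \<Rightarrow> (unit, unit, 'm) dobj" where
  "dunit e = \<lparr>pos = {()}, neg = {()}, rel = (\<lambda>_ _. e)\<rparr>"

definition dassoc :: "('u, 'x, 'm) dobj \<Rightarrow> ('v, 'y, 'm) dobj \<Rightarrow> ('w, 'z, 'm) dobj \<Rightarrow>
    (('u \<times> 'v) \<times> 'w \<Rightarrow> 'u \<times> ('v \<times> 'w)) \<times>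
    (('v \<times> 'w \<Rightarrow> 'x) \<times> ('u \<Rightarrow> ('w \<Rightarrow> 'y) \<times> ('v \<Rightarrow> 'z))
       \<Rightarrow> ('w \<Rightarrow> ('v \<Rightarrow> 'x) \<times> ('u \<Rightarrow> 'y)) \<times> ('u \<times> 'v \<Rightarrow> 'z))" where
  "dassoc A B C =
     ((\<lambda>((u, v), w)\<in>(pos A \<times> pos B) \<times> pos C. (u, (v, w))),
      (\<lambda>(h, k)\<in>(pos B \<times> pos C \<rightarrow>\<^sub>E neg A) \<times>
                (pos A \<rightarrow>\<^sub>E (pos C \<rightarrow>\<^sub>E neg B) \<times> (pos B \<rightarrow>\<^sub>E neg C)).
          ((\<lambda>w\<in>pos C. ((\<lambda>v\<in>pos B. h (v, w)), (\<lambda>u\<in>pos A. fst (k u) w))),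
           (\<lambda>(u, v)\<in>pos A \<times> pos B. snd (k u) v))))"

definition dlunitor :: "('u, 'x, 'm) dobj \<Rightarrow>
    (unit \<times> 'u \<Rightarrow> 'u) \<times> ('x \<Rightarrow> ('u \<Rightarrow> unit) \<times> (unit \<Rightarrow> 'x))" where
  "dlunitor A = ((\<lambda>(t, u)\<in>{()} \<times> pos A. u),
                 (\<lambda>x\<in>neg A. ((\<lambda>u\<in>pos A. ()), (\<lambda>t\<in>{()}. x))))"

definition drunitor :: "('u, 'x, 'm) dobj \<Rightarrow>
    ('u \<times> unit \<Rightarrow> 'u) \<times> ('x \<Rightarrow> (unit \<Rightarrow> 'x) \<times> ('u \<Rightarrow> unit))" where
  "drunitor A = ((\<lambda>(u, t)\<in>pos A \<times> {()}. u),
                 (\<lambda>x\<in>neg A. ((\<lambda>t\<in>{()}. x), (\<lambda>u\<in>pos A. ()))))"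

definition dlimp :: "('m \<Rightarrow> 'm \<Rightarrow> 'm) \<Rightarrow> ('u, 'x, 'm) dobj \<Rightarrow> ('v, 'y, 'm) dobj \<Rightarrow>
    (('u \<Rightarrow> 'v) \<times> ('y \<Rightarrow> 'x), 'u \<times> 'y, 'm) dobj" where
  "dlimp li A C =
     \<lparr>pos = (pos A \<rightarrow>\<^sub>E pos C) \<times> (neg C \<rightarrow>\<^sub>E neg A),
      neg = pos A \<times> neg C,
      rel = (\<lambda>(h, H) (u, y). li (rel A u (H y)) (rel C (h u) y))\<rparr>"

definition drimp :: "('m \<Rightarrow> 'm \<Rightarrow> 'm) \<Rightarrow> ('v, 'y, 'm) dobj \<Rightarrow> ('u, 'x, 'm) dobj \<Rightarrow>
    (('u \<Rightarrow> 'v) \<times> ('y \<Rightarrow> 'x), 'u \<times> 'y, 'm) dobj" where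
  "drimp ri C A =
     \<lparr>pos = (pos A \<rightarrow>\<^sub>E pos C) \<times> (neg C \<rightarrow>\<^sub>E neg A),
      neg = pos A \<times> neg C,
      rel = (\<lambda>(h, H) (u, y). ri (rel C (h u) y) (rel A u (H y)))\<rparr>"

text \<open>The same underlying map serves both A \<rightharpoonup> C \<rightarrow> A' \<rightharpoonup> C' and
  C \<leftharpoonup> A \<rightarrow> C' \<leftharpoonup> A'.\<close>
definition dihom_mor :: "('u2, 'x2, 'm) dobj \<Rightarrow> ('u, 'x, 'm) dobj \<Rightarrow>
    ('v, 'y, 'm) dobj \<Rightarrow> ('v2, 'y2, 'm) dobj \<Rightarrow>
    ('u2 \<Rightarrow> 'u) \<times> ('x \<Rightarrow> 'x2) \<Rightarrow> ('v \<Rightarrow> 'v2) \<times> ('y2 \<Rightarrow> 'y) \<Rightarrow>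
    (('u \<Rightarrow> 'v) \<times> ('y \<Rightarrow> 'x) \<Rightarrow> ('u2 \<Rightarrow> 'v2) \<times> ('y2 \<Rightarrow> 'x2)) \<times> ('u2 \<times> 'y2 \<Rightarrow> 'u \<times> 'y)" where
  "dihom_mor A' A C C' a c =
     ((\<lambda>(h, H)\<in>(pos A \<rightarrow>\<^sub>E pos C) \<times> (neg C \<rightarrow>\<^sub>E neg A).
          ((\<lambda>u\<in>pos A'. fst c (h (fst a u))), (\<lambda>y\<in>neg C'. snd a (H (snd c y))))),
      (\<lambda>(u, y)\<in>pos A' \<times> neg C'. (fst a u, snd c y)))"

definition dcurry_l :: "('u, 'x, 'm) dobj \<Rightarrow> ('v, 'y, 'm) dobj \<Rightarrow> ('w, 'z, 'm) dobj \<Rightarrow>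
    ('u \<times> 'v \<Rightarrow> 'w) \<times> ('z \<Rightarrow> ('v \<Rightarrow> 'x) \<times> ('u \<Rightarrow> 'y)) \<Rightarrow>
    ('v \<Rightarrow> ('u \<Rightarrow> 'w) \<times> ('z \<Rightarrow> 'x)) \<times> ('u \<times> 'z \<Rightarrow> 'y)" where
  "dcurry_l A B C \<phi> =
     ((\<lambda>v\<in>pos B. ((\<lambda>u\<in>pos A. fst \<phi> (u, v)), (\<lambda>z\<in>neg C. fst (snd \<phi> z) v))),
      (\<lambda>(u, z)\<in>pos A \<times> neg C. snd (snd \<phi> z) u))"

definition dcurry_r :: "('u, 'x, 'm) dobj \<Rightarrow> ('v, 'y, 'm) dobj \<Rightarrow> ('w, 'z, 'm) dobj \<Rightarrow>
    ('u \<times> 'v \<Rightarrow> 'w) \<times> ('z \<Rightarrow> ('v \<Rightarrow> 'x) \<times> ('u \<Rightarrow> 'y)) \<Rightarrow>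
    ('u \<Rightarrow> ('v \<Rightarrow> 'w) \<times> ('z \<Rightarrow> 'y)) \<times> ('v \<times> 'z \<Rightarrow> 'x)" where
  "dcurry_r A B C \<phi> =
     ((\<lambda>u\<in>pos A. ((\<lambda>v\<in>pos B. fst \<phi> (u, v)), (\<lambda>z\<in>neg C. snd (snd \<phi> z) u))),
      (\<lambda>(v, z)\<in>pos B \<times> neg C. fst (snd \<phi> z) v))"

end

theory Submission
  imports Defs
begin

text \<open>
  All constructions of Dial_M(Set) act componentwise on the underlying sets, so the category laws,
  the functoriality of \<open>\<otimes>\<close>, the naturality of the structure maps and the pentagon and triangle
  identities are identities between extensional functions that hold pointwise, whatever M is.
  The order of M only enters through the morphism condition \<open>\<alpha>(u, F y) \<le> \<beta>(f u, y)\<close>: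
  tensors of morphisms are morphisms because \<open>\<circ>\<close> is monotone, the associator and unitors and
  their inverses are morphisms because \<open>\<circ>\<close> is associative with unit e, and the internal homs act
  on morphisms because \<open>\<rightharpoonup>\<close> and \<open>\<leftharpoonup>\<close> are antitone in the argument that comes from the
  domain and monotone in the other. Finally, for \<open>\<phi> : A \<otimes> B \<rightarrow> C\<close> the morphism condition at
  \<open>((u, v), z)\<close> reads \<open>\<alpha>(u, h v) \<circ> \<beta>(v, k u) \<le> \<gamma>(\<phi>(u, v), z)\<close>; by residuation this is
  the morphism condition of the curried map \<open>B \<rightarrow> A \<rightharpoonup> C\<close>, resp. \<open>A \<rightarrow> C \<leftharpoonup> B\<close>.
\<close>

lemma restrict_eq_iff:
  "f \<in> extensional S \<Longrightarrow> restrict g S = f \<longleftrightarrow> (\<forall>x\<in>S. g x = f x)"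
  by (metis extensionalityI restrict_apply' restrict_extensional)

lemma PiE_unit_restrict: "k \<in> {()} \<rightarrow>\<^sub>E X \<Longrightarrow> (\<lambda>t\<in>{()}. k ()) = k"
  by (metis (full_types) PiE_restrict old.unit.exhaust restrict_ext)

lemma biclosed_posetD:
  assumes "biclosed_poset mult e li ri"
  shows "mult (mult a b) c = mult a (mult b c)"
    and "mult e a = a" and "mult a e = a"
    and "a \<le> a' \<Longrightarrow> mult a b \<le> mult a' b" and "b \<le> b' \<Longrightarrow> mult a b \<le> mult a b'"
    and "mult a x \<le> b \<longleftrightarrow> x \<le> li a b"
    and "mult x a \<le> b \<longleftrightarrow> x \<le> ri b a"
  using assms unfolding biclosed_poset_def by (meson order_trans)+

lemma left_residual_mono:
  fixes mult :: "'m::order \<Rightarrow> 'm \<Rightarrow> 'm"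
  assumes residual: "\<And>a x b. mult a x \<le> b \<longleftrightarrow> x \<le> li a b"
    and mono: "\<And>a a' b. a \<le> a' \<Longrightarrow> mult a b \<le> mult a' b"
    and "a' \<le> a" "b \<le> b'"
  shows "li a b \<le> li a' b'"
proof -
  have "mult a' (li a b) \<le> mult a (li a b)" using mono \<open>a' \<le> a\<close> .
  also have "\<dots> \<le> b" using residual by blast
  also have "\<dots> \<le> b'" by fact
  finally show ?thesis using residual by blast
qed

lemma right_residual_mono:
  fixes mult :: "'m::order \<Rightarrow> 'm \<Rightarrow> 'm"
  assumes residual: "\<And>a x b. mult x a \<le> b \<longleftrightarrow> x \<le> ri b a"
    and mono: "\<And>a b b'. b \<le> b' \<Longrightarrow> mult a b \<le> mult a b'"
    and "a' \<le> a" "b \<le> b'"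
  shows "ri b a \<le> ri b' a'"
proof -
  have "mult (ri b a) a' \<le> mult (ri b a) a" using mono \<open>a' \<le> a\<close> .
  also have "\<dots> \<le> b" using residual by blast
  also have "\<dots> \<le> b'" by fact
  finally show ?thesis using residual by blast
qed

lemma dtensor_simps [simp]:
  "pos (dtensor mult A B) = pos A \<times> pos B"
  "neg (dtensor mult A B) = (pos B \<rightarrow>\<^sub>E neg A) \<times> (pos A \<rightarrow>\<^sub>E neg B)"
  "rel (dtensor mult A B) x y = mult (rel A (fst x) (fst y (snd x))) (rel B (snd x) (snd y (fst x)))"
  by (simp_all add: dtensor_def split_beta)

lemma dunit_simps [simp]:
  "pos (dunit e) = {()}" "neg (dunit e) = {()}" "rel (dunit e) t s = e"
  by (simp_all add: dunit_def)

lemma dlimp_simps [simp]: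
  "pos (dlimp li A C) = (pos A \<rightarrow>\<^sub>E pos C) \<times> (neg C \<rightarrow>\<^sub>E neg A)"
  "neg (dlimp li A C) = pos A \<times> neg C"
  "rel (dlimp li A C) x y = li (rel A (fst y) (snd x (snd y))) (rel C (fst x (fst y)) (snd y))"
  by (simp_all add: dlimp_def split_beta)

lemma drimp_simps [simp]:
  "pos (drimp ri C A) = (pos A \<rightarrow>\<^sub>E pos C) \<times> (neg C \<rightarrow>\<^sub>E neg A)"
  "neg (drimp ri C A) = pos A \<times> neg C"
  "rel (drimp ri C A) x y = ri (rel C (fst x (fst y)) (snd y)) (rel A (fst y) (snd x (snd y)))"
  by (simp_all add: drimp_def split_beta)

lemma dhomI:
  assumes "f \<in> pos A \<rightarrow>\<^sub>E pos B" "F \<in> neg B \<rightarrow>\<^sub>E neg A"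
    and "\<And>u y. u \<in> pos A \<Longrightarrow> y \<in> neg B \<Longrightarrow> rel A u (F y) \<le> rel B (f u) y"
  shows "(f, F) \<in> dhom A B"
  using assms unfolding dhom_def by auto

lemma dhomD:
  assumes "\<phi> \<in> dhom A B"
  shows "fst \<phi> \<in> pos A \<rightarrow>\<^sub>E pos B" "snd \<phi> \<in> neg B \<rightarrow>\<^sub>E neg A"
    and "\<And>u y. u \<in> pos A \<Longrightarrow> y \<in> neg B \<Longrightarrow> rel A u (snd \<phi> y) \<le> rel B (fst \<phi> u) y"
  using assms unfolding dhom_def by auto

lemma dhom_memD:
  assumes "\<phi> \<in> dhom A B"
  shows "u \<in> pos A \<Longrightarrow> fst \<phi> u \<in> pos B" and "y \<in> neg B \<Longrightarrow> snd \<phi> y \<in> neg A"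
  using assms unfolding dhom_def by auto

lemma dhom_eq_restrict:
  "\<phi> \<in> dhom A B \<Longrightarrow> \<phi> = ((\<lambda>u\<in>pos A. fst \<phi> u), (\<lambda>y\<in>neg B. snd \<phi> y))"
  unfolding dhom_def by auto

lemma dcomp_restrict:
  "dcomp A C g f = ((\<lambda>u\<in>pos A. fst g (fst f u)), (\<lambda>z\<in>neg C. snd f (snd g z)))"
  by (simp add: dcomp_def compose_def)

lemma disoI:
  assumes "f \<in> dhom A B" "g \<in> dhom B A"
    and "\<And>u. u \<in> pos A \<Longrightarrow> fst g (fst f u) = u" "\<And>v. v \<in> pos B \<Longrightarrow> fst f (fst g v) = v"
    and "\<And>x. x \<in> neg A \<Longrightarrow> snd f (snd g x) = x" "\<And>y. y \<in> neg B \<Longrightarrow> snd g (snd f y) = y"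
  shows "diso A B f"
  unfolding diso_def did_def dcomp_restrict using assms by (auto intro!: bexI[of _ g] restrict_ext)

lemma dcomp_in_dhom:
  assumes f: "f \<in> dhom A B" and g: "g \<in> dhom B C"
  shows "dcomp A C g f \<in> dhom A C"
proof -
  have "rel A u (snd f (snd g z)) \<le> rel C (fst g (fst f u)) z" if "u \<in> pos A" "z \<in> neg C" for u z
    using dhomD[OF f] dhomD[OF g] that by (meson PiE_mem order_trans)
  with dhomD[OF f] dhomD[OF g] show ?thesis
    unfolding dcomp_restrict by (auto intro!: dhomI simp: restrict_PiE_iff)
qed

lemma did_in_dhom: "did A \<in> dhom A A"
  unfolding did_def dhom_def by auto

lemma dcomp_did_left: "f \<in> dhom A B \<Longrightarrow> dcomp A B (did B) f = f"
  by (subst (2) dhom_eq_restrict) (auto simp: dcomp_restrict did_def dhom_memD intro!: restrict_ext)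

lemma dcomp_did_right: "f \<in> dhom A B \<Longrightarrow> dcomp A B f (did A) = f"
  by (subst (2) dhom_eq_restrict) (auto simp: dcomp_restrict did_def dhom_memD intro!: restrict_ext)

lemma dcomp_assoc:
  assumes "f \<in> dhom A B" "g \<in> dhom B C" "h \<in> dhom C D"
  shows "dcomp A D h (dcomp A C g f) = dcomp A D (dcomp B D h g) f"
  using dhom_memD[OF assms(1)] dhom_memD[OF assms(2)] dhom_memD[OF assms(3)]
  by (auto simp: dcomp_restrict intro!: restrict_ext)

lemma dtensor_mor_in_dhom:
  fixes mult :: "'m::order \<Rightarrow> 'm \<Rightarrow> 'm"
  assumes mono_left: "\<And>a a' b. a \<le> a' \<Longrightarrow> mult a b \<le> mult a' b"
    and mono_right: "\<And>a b b'. b \<le> b' \<Longrightarrow> mult a b \<le> mult a b'"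
    and f: "f \<in> dhom A A'" and g: "g \<in> dhom B B'"
  shows "dtensor_mor A B A' B' f g \<in> dhom (dtensor mult A B) (dtensor mult A' B')"
  using dhom_memD[OF f] dhom_memD[OF g] dhomD(3)[OF f] dhomD(3)[OF g]
  unfolding dtensor_mor_def
  by (intro dhomI) (auto simp: restrict_PiE_iff PiE_iff intro!: order_trans[OF mono_left mono_right])

lemma dtensor_mor_did: "dtensor_mor A B A B (did A) (did B) = did (dtensor mult A B)"
  unfolding dtensor_mor_def did_def
  by (auto intro!: restrict_ext simp: PiE_iff restrict_eq_iff)

lemma dtensor_mor_dcomp:
  assumes "f \<in> dhom A A'" "f' \<in> dhom A' A''" "g \<in> dhom B B'" "g' \<in> dhom B' B''"
  shows "dtensor_mor A B A'' B'' (dcomp A A'' f' f) (dcomp B B'' g' g) =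
    dcomp (dtensor mult A B) (dtensor mult A'' B'')
      (dtensor_mor A' B' A'' B'' f' g') (dtensor_mor A B A' B' f g)"
  using dhom_memD[OF assms(1)] dhom_memD[OF assms(2)] dhom_memD[OF assms(3)] dhom_memD[OF assms(4)]
  unfolding dcomp_restrict dtensor_mor_def
  by (auto intro!: restrict_ext simp: restrict_PiE_iff PiE_iff)

definition dassoc_inv :: "('u, 'x, 'm) dobj \<Rightarrow> ('v, 'y, 'm) dobj \<Rightarrow> ('w, 'z, 'm) dobj \<Rightarrow>
    ('u \<times> ('v \<times> 'w) \<Rightarrow> ('u \<times> 'v) \<times> 'w) \<times>
    (('w \<Rightarrow> ('v \<Rightarrow> 'x) \<times> ('u \<Rightarrow> 'y)) \<times> ('u \<times> 'v \<Rightarrow> 'z)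
       \<Rightarrow> ('v \<times> 'w \<Rightarrow> 'x) \<times> ('u \<Rightarrow> ('w \<Rightarrow> 'y) \<times> ('v \<Rightarrow> 'z)))" where
  "dassoc_inv A B C =
     ((\<lambda>(u, (v, w))\<in>pos A \<times> (pos B \<times> pos C). ((u, v), w)),
      (\<lambda>(H, K)\<in>(pos C \<rightarrow>\<^sub>E (pos B \<rightarrow>\<^sub>E neg A) \<times> (pos A \<rightarrow>\<^sub>E neg B)) \<times> (pos A \<times> pos B \<rightarrow>\<^sub>E neg C).
          ((\<lambda>(v, w)\<in>pos B \<times> pos C. fst (H w) v),
           (\<lambda>u\<in>pos A. ((\<lambda>w\<in>pos C. snd (H w) u), (\<lambda>v\<in>pos B. K (u, v)))))))"

lemma dassoc_in_dhom:
  assumes assoc: "\<And>a b c. mult (mult a b) c = mult a (mult b c)"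
  shows "dassoc A B C \<in> dhom (dtensor mult (dtensor mult A B) C) (dtensor mult A (dtensor mult B C))"
  unfolding dassoc_def
  by (rule dhomI) (auto simp: assoc restrict_PiE_iff PiE_iff mem_Times_iff)

lemma dassoc_inv_in_dhom:
  assumes assoc: "\<And>a b c. mult (mult a b) c = mult a (mult b c)"
  shows "dassoc_inv A B C \<in> dhom (dtensor mult A (dtensor mult B C)) (dtensor mult (dtensor mult A B) C)"
  unfolding dassoc_inv_def
  by (rule dhomI) (auto simp: assoc restrict_PiE_iff PiE_iff mem_Times_iff)

lemma diso_dassoc:
  assumes assoc: "\<And>a b c. mult (mult a b) c = mult a (mult b c)"
  shows "diso (dtensor mult (dtensor mult A B) C) (dtensor mult A (dtensor mult B C)) (dassoc A B C)"
  using dassoc_in_dhom[where mult = mult, OF assoc] dassoc_inv_in_dhom[where mult = mult, OF assoc]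
  by (rule disoI)
    (auto simp: dassoc_def dassoc_inv_def restrict_PiE_iff PiE_iff mem_Times_iff restrict_eq_iff
      prod.case_eq_if prod_eq_iff cong: restrict_cong)

lemma dassoc_natural:
  assumes f: "f \<in> dhom A A'" and g: "g \<in> dhom B B'" and h: "h \<in> dhom C C'"
  shows "dcomp (dtensor mult (dtensor mult A B) C) (dtensor mult A' (dtensor mult B' C'))
          (dassoc A' B' C')
          (dtensor_mor (dtensor mult A B) C (dtensor mult A' B') C' (dtensor_mor A B A' B' f g) h) =
        dcomp (dtensor mult (dtensor mult A B) C) (dtensor mult A' (dtensor mult B' C'))
          (dtensor_mor A (dtensor mult B C) A' (dtensor mult B' C') f (dtensor_mor B C B' C' g h))
          (dassoc A B C)"
  using dhom_memD[OF f] dhom_memD[OF g] dhom_memD[OF h]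
  unfolding dcomp_restrict dtensor_mor_def dassoc_def
  by (auto intro!: restrict_ext simp: restrict_PiE_iff PiE_iff mem_Times_iff prod.case_eq_if cong: restrict_cong)

definition dlunitor_inv :: "('u, 'x, 'm) dobj \<Rightarrow> ('u \<Rightarrow> unit \<times> 'u) \<times> (('u \<Rightarrow> unit) \<times> (unit \<Rightarrow> 'x) \<Rightarrow> 'x)" where
  "dlunitor_inv A = ((\<lambda>u\<in>pos A. ((), u)), (\<lambda>(h, k)\<in>(pos A \<rightarrow>\<^sub>E {()}) \<times> ({()} \<rightarrow>\<^sub>E neg A). k ()))"

definition drunitor_inv :: "('u, 'x, 'm) dobj \<Rightarrow> ('u \<Rightarrow> 'u \<times> unit) \<times> ((unit \<Rightarrow> 'x) \<times> ('u \<Rightarrow> unit) \<Rightarrow> 'x)" where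
  "drunitor_inv A = ((\<lambda>u\<in>pos A. (u, ())), (\<lambda>(k, h)\<in>({()} \<rightarrow>\<^sub>E neg A) \<times> (pos A \<rightarrow>\<^sub>E {()}). k ()))"

lemma diso_dlunitor:
  assumes unit: "\<And>a. mult e a = a"
  shows "diso (dtensor mult (dunit e) A) A (dlunitor A)"
proof (rule disoI)
  show "dlunitor A \<in> dhom (dtensor mult (dunit e) A) A"
    unfolding dlunitor_def by (rule dhomI) (auto simp: restrict_PiE_iff unit)
  show "dlunitor_inv A \<in> dhom A (dtensor mult (dunit e) A)"
    unfolding dlunitor_inv_def by (rule dhomI) (auto simp: restrict_PiE_iff unit)
qed (auto simp: dlunitor_def dlunitor_inv_def PiE_unit_restrict)

lemma diso_drunitor:
  assumes unit: "\<And>a. mult a e = a"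
  shows "diso (dtensor mult A (dunit e)) A (drunitor A)"
proof (rule disoI)
  show "drunitor A \<in> dhom (dtensor mult A (dunit e)) A"
    unfolding drunitor_def by (rule dhomI) (auto simp: restrict_PiE_iff unit)
  show "drunitor_inv A \<in> dhom A (dtensor mult A (dunit e))"
    unfolding drunitor_inv_def by (rule dhomI) (auto simp: restrict_PiE_iff unit)
qed (auto simp: drunitor_def drunitor_inv_def PiE_unit_restrict)

lemma dlunitor_natural:
  assumes f: "f \<in> dhom A A'"
  shows "dcomp (dtensor mult (dunit e) A) A' f (dlunitor A) =
        dcomp (dtensor mult (dunit e) A) A' (dlunitor A')
          (dtensor_mor (dunit e) A (dunit e) A' (did (dunit e)) f)"
  using dhom_memD[OF f]
  unfolding dcomp_restrict dtensor_mor_def dlunitor_def did_def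
  by (auto intro!: restrict_ext simp: restrict_PiE_iff PiE_iff)

lemma drunitor_natural:
  assumes f: "f \<in> dhom A A'"
  shows "dcomp (dtensor mult A (dunit e)) A' f (drunitor A) =
        dcomp (dtensor mult A (dunit e)) A' (drunitor A')
          (dtensor_mor A (dunit e) A' (dunit e) f (did (dunit e)))"
  using dhom_memD[OF f]
  unfolding dcomp_restrict dtensor_mor_def drunitor_def did_def
  by (auto intro!: restrict_ext simp: restrict_PiE_iff PiE_iff)

lemma dassoc_pentagon:
  "dcomp (dtensor mult (dtensor mult (dtensor mult A B) C) D)
          (dtensor mult A (dtensor mult B (dtensor mult C D)))
      (dassoc A B (dtensor mult C D)) (dassoc (dtensor mult A B) C D) =
    dcomp (dtensor mult (dtensor mult (dtensor mult A B) C) D)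
          (dtensor mult A (dtensor mult B (dtensor mult C D)))
      (dtensor_mor A (dtensor mult (dtensor mult B C) D) A (dtensor mult B (dtensor mult C D))
         (did A) (dassoc B C D))
      (dcomp (dtensor mult (dtensor mult (dtensor mult A B) C) D)
             (dtensor mult A (dtensor mult (dtensor mult B C) D))
         (dassoc A (dtensor mult B C) D)
         (dtensor_mor (dtensor mult (dtensor mult A B) C) D (dtensor mult A (dtensor mult B C)) D
            (dassoc A B C) (did D)))"
  unfolding dcomp_restrict dtensor_mor_def dassoc_def did_def
  by (auto intro!: restrict_ext simp: restrict_PiE_iff PiE_iff mem_Times_iff prod.case_eq_if cong: restrict_cong)

lemma dassoc_triangle:
  "dcomp (dtensor mult (dtensor mult A (dunit e)) B) (dtensor mult A B)
      (dtensor_mor A (dtensor mult (dunit e) B) A B (did A) (dlunitor B))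
      (dassoc A (dunit e) B) =
    dtensor_mor (dtensor mult A (dunit e)) B A B (drunitor A) (did B)"
  unfolding dcomp_restrict dtensor_mor_def dassoc_def did_def dlunitor_def drunitor_def
  by (auto intro!: restrict_ext simp: restrict_PiE_iff PiE_iff)

lemma dihom_mor_in_dhom_dlimp:
  assumes mono: "\<And>a a' b b'. a' \<le> a \<Longrightarrow> b \<le> b' \<Longrightarrow> li a b \<le> li a' b'"
    and a: "a \<in> dhom A' A" and c: "c \<in> dhom C C'"
  shows "dihom_mor A' A C C' a c \<in> dhom (dlimp li A C) (dlimp li A' C')"
  using dhom_memD[OF a] dhom_memD[OF c] dhomD(3)[OF a] dhomD(3)[OF c]
  unfolding dihom_mor_def
  by (intro dhomI) (auto simp: restrict_PiE_iff PiE_iff intro!: mono)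

lemma dihom_mor_in_dhom_drimp:
  assumes mono: "\<And>a a' b b'. a' \<le> a \<Longrightarrow> b \<le> b' \<Longrightarrow> ri b a \<le> ri b' a'"
    and a: "a \<in> dhom A' A" and c: "c \<in> dhom C C'"
  shows "dihom_mor A' A C C' a c \<in> dhom (drimp ri C A) (drimp ri C' A')"
  using dhom_memD[OF a] dhom_memD[OF c] dhomD(3)[OF a] dhomD(3)[OF c]
  unfolding dihom_mor_def
  by (intro dhomI) (auto simp: restrict_PiE_iff PiE_iff intro!: mono)

definition duncurry_l :: "('u, 'x, 'm) dobj \<Rightarrow> ('v, 'y, 'm) dobj \<Rightarrow> ('w, 'z, 'm) dobj \<Rightarrow>
    ('v \<Rightarrow> ('u \<Rightarrow> 'w) \<times> ('z \<Rightarrow> 'x)) \<times> ('u \<times> 'z \<Rightarrow> 'y) \<Rightarrow>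
    ('u \<times> 'v \<Rightarrow> 'w) \<times> ('z \<Rightarrow> ('v \<Rightarrow> 'x) \<times> ('u \<Rightarrow> 'y))" where
  "duncurry_l A B C \<psi> =
     ((\<lambda>(u, v)\<in>pos A \<times> pos B. fst (fst \<psi> v) u),
      (\<lambda>z\<in>neg C. ((\<lambda>v\<in>pos B. snd (fst \<psi> v) z), (\<lambda>u\<in>pos A. snd \<psi> (u, z)))))"

lemma dcurry_l_in_dhom:
  assumes residual: "\<And>a x b. mult a x \<le> b \<longleftrightarrow> x \<le> li a b"
    and \<phi>: "\<phi> \<in> dhom (dtensor mult A B) C"
  shows "dcurry_l A B C \<phi> \<in> dhom B (dlimp li A C)"
  using dhomD[OF \<phi>]
  unfolding dcurry_l_def
  by (intro dhomI) (auto simp: restrict_PiE_iff PiE_iff mem_Times_iff residual[symmetric])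

lemma duncurry_l_in_dhom:
  assumes residual: "\<And>a x b. mult a x \<le> b \<longleftrightarrow> x \<le> li a b"
    and \<psi>: "\<psi> \<in> dhom B (dlimp li A C)"
  shows "duncurry_l A B C \<psi> \<in> dhom (dtensor mult A B) C"
  using dhomD[OF \<psi>]
  unfolding duncurry_l_def
  by (intro dhomI) (auto simp: restrict_PiE_iff PiE_iff mem_Times_iff residual)

lemma dcurry_l_bij:
  assumes residual: "\<And>a x b. mult a x \<le> b \<longleftrightarrow> x \<le> li a b"
  shows "bij_betw (dcurry_l A B C) (dhom (dtensor mult A B) C) (dhom B (dlimp li A C))"
proof (rule bij_betw_byWitness[where f'="duncurry_l A B C"])
  show "\<forall>\<phi>\<in>dhom (dtensor mult A B) C. duncurry_l A B C (dcurry_l A B C \<phi>) = \<phi>"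
    by (auto simp: dhom_def dcurry_l_def duncurry_l_def PiE_iff mem_Times_iff restrict_eq_iff prod_eq_iff)
  show "\<forall>\<psi>\<in>dhom B (dlimp li A C). dcurry_l A B C (duncurry_l A B C \<psi>) = \<psi>"
    by (auto simp: dhom_def dcurry_l_def duncurry_l_def PiE_iff mem_Times_iff restrict_eq_iff prod_eq_iff)
qed (auto intro: dcurry_l_in_dhom[OF residual] duncurry_l_in_dhom[OF residual])

lemma dcurry_l_natural:
  assumes a: "a \<in> dhom A' A" and b: "b \<in> dhom B' B" and c: "c \<in> dhom C C'"
    and \<phi>: "\<phi> \<in> dhom (dtensor mult A B) C"
  shows "dcurry_l A' B' C'
          (dcomp (dtensor mult A' B') C' c
             (dcomp (dtensor mult A' B') C \<phi> (dtensor_mor A' B' A B a b))) =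
        dcomp B' (dlimp li A' C') (dihom_mor A' A C C' a c)
          (dcomp B' (dlimp li A C) (dcurry_l A B C \<phi>) b)"
  using dhom_memD[OF a] dhom_memD[OF b] dhom_memD[OF c] dhomD(1,2)[OF \<phi>]
  unfolding dcomp_restrict dcurry_l_def dihom_mor_def dtensor_mor_def
  by (auto intro!: restrict_ext simp: restrict_PiE_iff PiE_iff mem_Times_iff prod.case_eq_if cong: restrict_cong)

definition duncurry_r :: "('u, 'x, 'm) dobj \<Rightarrow> ('v, 'y, 'm) dobj \<Rightarrow> ('w, 'z, 'm) dobj \<Rightarrow>
    ('u \<Rightarrow> ('v \<Rightarrow> 'w) \<times> ('z \<Rightarrow> 'y)) \<times> ('v \<times> 'z \<Rightarrow> 'x) \<Rightarrow>
    ('u \<times> 'v \<Rightarrow> 'w) \<times> ('z \<Rightarrow> ('v \<Rightarrow> 'x) \<times> ('u \<Rightarrow> 'y))" where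
  "duncurry_r A B C \<psi> =
     ((\<lambda>(u, v)\<in>pos A \<times> pos B. fst (fst \<psi> u) v),
      (\<lambda>z\<in>neg C. ((\<lambda>v\<in>pos B. snd \<psi> (v, z)), (\<lambda>u\<in>pos A. snd (fst \<psi> u) z))))"

lemma dcurry_r_in_dhom:
  assumes residual: "\<And>a x b. mult x a \<le> b \<longleftrightarrow> x \<le> ri b a"
    and \<phi>: "\<phi> \<in> dhom (dtensor mult A B) C"
  shows "dcurry_r A B C \<phi> \<in> dhom A (drimp ri C B)"
  using dhomD[OF \<phi>]
  unfolding dcurry_r_def
  by (intro dhomI) (auto simp: restrict_PiE_iff PiE_iff mem_Times_iff residual[symmetric])

lemma duncurry_r_in_dhom:
  assumes residual: "\<And>a x b. mult x a \<le> b \<longleftrightarrow> x \<le> ri b a"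
    and \<psi>: "\<psi> \<in> dhom A (drimp ri C B)"
  shows "duncurry_r A B C \<psi> \<in> dhom (dtensor mult A B) C"
  using dhomD[OF \<psi>]
  unfolding duncurry_r_def
  by (intro dhomI) (auto simp: restrict_PiE_iff PiE_iff mem_Times_iff residual)

lemma dcurry_r_bij:
  assumes residual: "\<And>a x b. mult x a \<le> b \<longleftrightarrow> x \<le> ri b a"
  shows "bij_betw (dcurry_r A B C) (dhom (dtensor mult A B) C) (dhom A (drimp ri C B))"
proof (rule bij_betw_byWitness[where f'="duncurry_r A B C"])
  show "\<forall>\<phi>\<in>dhom (dtensor mult A B) C. duncurry_r A B C (dcurry_r A B C \<phi>) = \<phi>"
    by (auto simp: dhom_def dcurry_r_def duncurry_r_def PiE_iff mem_Times_iff restrict_eq_iff prod_eq_iff)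
  show "\<forall>\<psi>\<in>dhom A (drimp ri C B). dcurry_r A B C (duncurry_r A B C \<psi>) = \<psi>"
    by (auto simp: dhom_def dcurry_r_def duncurry_r_def PiE_iff mem_Times_iff restrict_eq_iff prod_eq_iff)
qed (auto intro: dcurry_r_in_dhom[OF residual] duncurry_r_in_dhom[OF residual])

lemma dcurry_r_natural:
  assumes a: "a \<in> dhom A' A" and b: "b \<in> dhom B' B" and c: "c \<in> dhom C C'"
    and \<phi>: "\<phi> \<in> dhom (dtensor mult A B) C"
  shows "dcurry_r A' B' C'
          (dcomp (dtensor mult A' B') C' c
             (dcomp (dtensor mult A' B') C \<phi> (dtensor_mor A' B' A B a b))) =
        dcomp A' (drimp ri C' B') (dihom_mor B' B C C' b c)
          (dcomp A' (drimp ri C B) (dcurry_r A B C \<phi>) a)"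
  using dhom_memD[OF a] dhom_memD[OF b] dhom_memD[OF c] dhomD(1,2)[OF \<phi>]
  unfolding dcomp_restrict dcurry_r_def dihom_mor_def dtensor_mor_def
  by (auto intro!: restrict_ext simp: restrict_PiE_iff PiE_iff mem_Times_iff prod.case_eq_if cong: restrict_cong)

theorem theorem1:
  fixes mult :: "'m::order \<Rightarrow> 'm \<Rightarrow> 'm" and e :: 'm
    and li :: "'m \<Rightarrow> 'm \<Rightarrow> 'm" and ri :: "'m \<Rightarrow> 'm \<Rightarrow> 'm"
  assumes "biclosed_poset mult e li ri"
  shows
    \<comment> \<open>(1) Dial_M(Set) is a category\<close>
    "(\<forall>(A::(_,_,'m) dobj) (B::(_,_,'m) dobj) (C::(_,_,'m) dobj) f g.
        f \<in> dhom A B \<longrightarrow> g \<in> dhom B C \<longrightarrow> dcomp A C g f \<in> dhom A C) \<and>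
     (\<forall>(A::(_,_,'m) dobj). did A \<in> dhom A A) \<and>
     (\<forall>(A::(_,_,'m) dobj) (B::(_,_,'m) dobj) f.
        f \<in> dhom A B \<longrightarrow> dcomp A B (did B) f = f \<and> dcomp A B f (did A) = f) \<and>
     (\<forall>(A::(_,_,'m) dobj) (B::(_,_,'m) dobj) (C::(_,_,'m) dobj) (D::(_,_,'m) dobj) f g h.
        f \<in> dhom A B \<longrightarrow> g \<in> dhom B C \<longrightarrow> h \<in> dhom C D \<longrightarrow>
        dcomp A D h (dcomp A C g f) = dcomp A D (dcomp B D h g) f) \<and>
     \<comment> \<open>(2) the tensor is a bifunctor\<close>
     (\<forall>(A::(_,_,'m) dobj) (B::(_,_,'m) dobj) (A'::(_,_,'m) dobj) (B'::(_,_,'m) dobj) f g.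
        f \<in> dhom A A' \<longrightarrow> g \<in> dhom B B' \<longrightarrow>
        dtensor_mor A B A' B' f g \<in> dhom (dtensor mult A B) (dtensor mult A' B')) \<and>
     (\<forall>(A::(_,_,'m) dobj) (B::(_,_,'m) dobj).
        dtensor_mor A B A B (did A) (did B) = did (dtensor mult A B)) \<and>
     (\<forall>(A::(_,_,'m) dobj) (B::(_,_,'m) dobj) (A'::(_,_,'m) dobj) (B'::(_,_,'m) dobj)
        (A''::(_,_,'m) dobj) (B''::(_,_,'m) dobj) f g f' g'.
        f \<in> dhom A A' \<longrightarrow> f' \<in> dhom A' A'' \<longrightarrow> g \<in> dhom B B' \<longrightarrow> g' \<in> dhom B' B'' \<longrightarrow>
        dtensor_mor A B A'' B'' (dcomp A A'' f' f) (dcomp B B'' g' g) =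
        dcomp (dtensor mult A B) (dtensor mult A'' B'')
          (dtensor_mor A' B' A'' B'' f' g') (dtensor_mor A B A' B' f g)) \<and>
     \<comment> \<open>(2) associator: natural isomorphism\<close>
     (\<forall>(A::(_,_,'m) dobj) (B::(_,_,'m) dobj) (C::(_,_,'m) dobj).
        diso (dtensor mult (dtensor mult A B) C) (dtensor mult A (dtensor mult B C)) (dassoc A B C)) \<and>
     (\<forall>(A::(_,_,'m) dobj) (B::(_,_,'m) dobj) (C::(_,_,'m) dobj)
        (A'::(_,_,'m) dobj) (B'::(_,_,'m) dobj) (C'::(_,_,'m) dobj) f g h.
        f \<in> dhom A A' \<longrightarrow> g \<in> dhom B B' \<longrightarrow> h \<in> dhom C C' \<longrightarrow>
        dcomp (dtensor mult (dtensor mult A B) C) (dtensor mult A' (dtensor mult B' C'))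
          (dassoc A' B' C')
          (dtensor_mor (dtensor mult A B) C (dtensor mult A' B') C' (dtensor_mor A B A' B' f g) h) =
        dcomp (dtensor mult (dtensor mult A B) C) (dtensor mult A' (dtensor mult B' C'))
          (dtensor_mor A (dtensor mult B C) A' (dtensor mult B' C') f (dtensor_mor B C B' C' g h))
          (dassoc A B C)) \<and>
     \<comment> \<open>(2) left and right unitors: natural isomorphisms\<close>
     (\<forall>(A::(_,_,'m) dobj). diso (dtensor mult (dunit e) A) A (dlunitor A)) \<and>
     (\<forall>(A::(_,_,'m) dobj) (A'::(_,_,'m) dobj) f.
        f \<in> dhom A A' \<longrightarrow>
        dcomp (dtensor mult (dunit e) A) A' f (dlunitor A) =
        dcomp (dtensor mult (dunit e) A) A' (dlunitor A')
          (dtensor_mor (dunit e) A (dunit e) A' (did (dunit e)) f)) \<and>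
     (\<forall>(A::(_,_,'m) dobj). diso (dtensor mult A (dunit e)) A (drunitor A)) \<and>
     (\<forall>(A::(_,_,'m) dobj) (A'::(_,_,'m) dobj) f.
        f \<in> dhom A A' \<longrightarrow>
        dcomp (dtensor mult A (dunit e)) A' f (drunitor A) =
        dcomp (dtensor mult A (dunit e)) A' (drunitor A')
          (dtensor_mor A (dunit e) A' (dunit e) f (did (dunit e)))) \<and>
     \<comment> \<open>(2) pentagon axiom\<close>
     (\<forall>(A::(_,_,'m) dobj) (B::(_,_,'m) dobj) (C::(_,_,'m) dobj) (D::(_,_,'m) dobj).
        dcomp (dtensor mult (dtensor mult (dtensor mult A B) C) D)
              (dtensor mult A (dtensor mult B (dtensor mult C D)))
          (dassoc A B (dtensor mult C D)) (dassoc (dtensor mult A B) C D) =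
        dcomp (dtensor mult (dtensor mult (dtensor mult A B) C) D)
              (dtensor mult A (dtensor mult B (dtensor mult C D)))
          (dtensor_mor A (dtensor mult (dtensor mult B C) D) A (dtensor mult B (dtensor mult C D))
             (did A) (dassoc B C D))
          (dcomp (dtensor mult (dtensor mult (dtensor mult A B) C) D)
                 (dtensor mult A (dtensor mult (dtensor mult B C) D))
             (dassoc A (dtensor mult B C) D)
             (dtensor_mor (dtensor mult (dtensor mult A B) C) D (dtensor mult A (dtensor mult B C)) D
                (dassoc A B C) (did D)))) \<and>
     \<comment> \<open>(2) triangle axiom\<close>
     (\<forall>(A::(_,_,'m) dobj) (B::(_,_,'m) dobj).
        dcomp (dtensor mult (dtensor mult A (dunit e)) B) (dtensor mult A B)
          (dtensor_mor A (dtensor mult (dunit e) B) A B (did A) (dlunitor B))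
          (dassoc A (dunit e) B) =
        dtensor_mor (dtensor mult A (dunit e)) B A B (drunitor A) (did B)) \<and>
     \<comment> \<open>(3) the internal homs act on morphisms\<close>
     (\<forall>(A'::(_,_,'m) dobj) (A::(_,_,'m) dobj) (C::(_,_,'m) dobj) (C'::(_,_,'m) dobj) a c.
        a \<in> dhom A' A \<longrightarrow> c \<in> dhom C C' \<longrightarrow>
        dihom_mor A' A C C' a c \<in> dhom (dlimp li A C) (dlimp li A' C') \<and>
        dihom_mor A' A C C' a c \<in> dhom (drimp ri C A) (drimp ri C' A')) \<and>
     \<comment> \<open>(3) Hom(A \<otimes> B, C) \<cong> Hom(B, A \<rightharpoonup> C), natural in A, B, C\<close>
     (\<forall>(A::(_,_,'m) dobj) (B::(_,_,'m) dobj) (C::(_,_,'m) dobj).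
        bij_betw (dcurry_l A B C) (dhom (dtensor mult A B) C) (dhom B (dlimp li A C))) \<and>
     (\<forall>(A::(_,_,'m) dobj) (B::(_,_,'m) dobj) (C::(_,_,'m) dobj)
        (A'::(_,_,'m) dobj) (B'::(_,_,'m) dobj) (C'::(_,_,'m) dobj) a b c \<phi>.
        a \<in> dhom A' A \<longrightarrow> b \<in> dhom B' B \<longrightarrow> c \<in> dhom C C' \<longrightarrow> \<phi> \<in> dhom (dtensor mult A B) C \<longrightarrow>
        dcurry_l A' B' C'
          (dcomp (dtensor mult A' B') C' c
             (dcomp (dtensor mult A' B') C \<phi> (dtensor_mor A' B' A B a b))) =
        dcomp B' (dlimp li A' C') (dihom_mor A' A C C' a c)
          (dcomp B' (dlimp li A C) (dcurry_l A B C \<phi>) b)) \<and>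
     \<comment> \<open>(3) Hom(A \<otimes> B, C) \<cong> Hom(A, C \<leftharpoonup> B), natural in A, B, C\<close>
     (\<forall>(A::(_,_,'m) dobj) (B::(_,_,'m) dobj) (C::(_,_,'m) dobj).
        bij_betw (dcurry_r A B C) (dhom (dtensor mult A B) C) (dhom A (drimp ri C B))) \<and>
     (\<forall>(A::(_,_,'m) dobj) (B::(_,_,'m) dobj) (C::(_,_,'m) dobj)
        (A'::(_,_,'m) dobj) (B'::(_,_,'m) dobj) (C'::(_,_,'m) dobj) a b c \<phi>.
        a \<in> dhom A' A \<longrightarrow> b \<in> dhom B' B \<longrightarrow> c \<in> dhom C C' \<longrightarrow> \<phi> \<in> dhom (dtensor mult A B) C \<longrightarrow>
        dcurry_r A' B' C'
          (dcomp (dtensor mult A' B') C' c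
             (dcomp (dtensor mult A' B') C \<phi> (dtensor_mor A' B' A B a b))) =
        dcomp A' (drimp ri C' B') (dihom_mor B' B C C' b c)
          (dcomp A' (drimp ri C B) (dcurry_r A B C \<phi>) a))"
proof -
  note bp = biclosed_posetD[OF assms]
  show ?thesis
    by (intro conjI allI impI)
      (rule dcomp_in_dhom did_in_dhom dcomp_did_left dcomp_did_right dcomp_assoc
         dtensor_mor_in_dhom[where mult = mult, OF bp(4,5)] dtensor_mor_did dtensor_mor_dcomp
         diso_dassoc[where mult = mult, OF bp(1)] dassoc_natural
         diso_dlunitor[where mult = mult, OF bp(2)] dlunitor_natural
         diso_drunitor[where mult = mult, OF bp(3)] drunitor_natural dassoc_pentagon dassoc_triangle
         dihom_mor_in_dhom_dlimp[OF left_residual_mono[OF bp(6) bp(4)]]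
         dihom_mor_in_dhom_drimp[OF right_residual_mono[OF bp(7) bp(5)]]
         dcurry_l_bij[where mult = mult, OF bp(6)] dcurry_l_natural
         dcurry_r_bij[where mult = mult, OF bp(7)] dcurry_r_natural;
       assumption)+
qed

end
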